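(* Let $\mathcal{X}\subseteq\{0,1\}^n$ be nonempty, $\hat c\in\mathbb{R}^n$, $C\in\mathbb{R}^{n\times m}$, and for $\lambda\ge 0$ let $\mathcal{U}(\lambda)=\{\hat c+C\xi:\xi\in\mathbb{R}^m,\ \|\xi\|_2\le\lambda\}$. Let $\Lambda\subseteq\mathbb{R}_{\ge 0}$ and $w:\Lambda\to\mathbb{R}_{\ge0}$ be such that $\int_\Lambda w(\lambda)\,d\lambda$ and $\int_\Lambda \lambda w(\lambda)\,d\lambda$ are finite, and define \[ val(x)=\int_\Lambda w(\lambda)\Big(\max_{c\in\mathcal{U}(\lambda)} c^t x\Big)\,d\lambda . \] Then there exists $\lambda'\ge 0$ such that every optimal solution of the single robust problem $\min_{x\in\mathcal{X}}\max_{c\in\mathcal{U}(\lambda')}c^tx$ is an optimal solution of $\min_{x\in\mathcal{X}} val(x)$; that is, an optimal solution of the latter problem can be found by solving a single robust problem with ellipsoidal uncertainty.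
   Context: This is the compromise approach to variable-sized (ellipsoidal) uncertainty for min-max robust combinatorial optimization with nominal problem $\min\{c^tx:x\in\mathcal{X}\}$. *)

theory Defs
  imports "HOL-Analysis.Analysis"
begin

definition unc_set :: "real^'n \<Rightarrow> real^'m^'n \<Rightarrow> real \<Rightarrow> (real^'n) set" where
  "unc_set chat C lam = {chat + C *v xi | xi. norm xi \<le> lam}"

definition rob_obj :: "real^'n \<Rightarrow> real^'m^'n \<Rightarrow> real \<Rightarrow> real^'n \<Rightarrow> real" where
  "rob_obj chat C lam x = Sup {c \<bullet> x | c. c \<in> unc_set chat C lam}"

definition comp_val :: "real set \<Rightarrow> (real \<Rightarrow> real) \<Rightarrow> real^'n \<Rightarrow> real^'m^'n \<Rightarrow> real^'n \<Rightarrow> real" where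
  "comp_val Lam w chat C x = (LINT lam:Lam|lborel. w lam * rob_obj chat C lam x)"

definition is_opt :: "('a \<Rightarrow> real) \<Rightarrow> 'a set \<Rightarrow> 'a \<Rightarrow> bool" where
  "is_opt f X x \<longleftrightarrow> x \<in> X \<and> (\<forall>y\<in>X. f x \<le> f y)"

end

theory Submission
  imports Defs
begin

text \<open>For \<open>\<lambda> \<ge> 0\<close> the robust objective is \<open>\<hat>c\<^sup>t x + \<lambda> \<parallel>C\<^sup>t x\<parallel>\<close>, so \<open>val(x) = W \<hat>c\<^sup>t x + L \<parallel>C\<^sup>t x\<parallel>\<close>
  with \<open>W = \<integral>\<^sub>\<Lambda> w\<close> and \<open>L = \<integral>\<^sub>\<Lambda> \<lambda> w\<close>. Hence \<open>val = W \<cdot> rob(L / W)\<close> when \<open>W > 0\<close>, and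
  \<open>val = 0\<close> when \<open>W = 0\<close> (then \<open>w\<close> vanishes almost everywhere on \<open>\<Lambda>\<close>, so \<open>L = 0\<close>); with
  \<open>L / 0 = 0\<close> both cases read \<open>val = W \<cdot> rob(L / W)\<close>, and scaling by \<open>W \<ge> 0\<close> preserves minimisers.\<close>

lemma inner_matrix_vector_mult:
  fixes C :: "real^'m^'n"
  shows "(C *v xi) \<bullet> x = xi \<bullet> (transpose C *v x)"
  by (metis dot_lmul_matrix inner_commute transpose_matrix_vector)

lemma Sup_inner_cball:
  fixes v :: "'a::real_inner"
  assumes "lam \<ge> 0"
  shows "Sup {a + xi \<bullet> v | xi. norm xi \<le> lam} = a + lam * norm v"
proof (rule cSup_eq_maximum)
  define xi0 where "xi0 = (if v = 0 then 0 else (lam / norm v) *\<^sub>R v)"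
  have "norm xi0 \<le> lam" using assms by (simp add: xi0_def)
  moreover have "xi0 \<bullet> v = lam * norm v"
    by (simp add: xi0_def dot_square_norm power2_eq_square)
  ultimately show "a + lam * norm v \<in> {a + xi \<bullet> v | xi. norm xi \<le> lam}"
    by (metis (mono_tags, lifting) mem_Collect_eq)
next
  fix y assume "y \<in> {a + xi \<bullet> v | xi. norm xi \<le> lam}"
  then obtain xi where y: "y = a + xi \<bullet> v" "norm xi \<le> lam" by auto
  have "xi \<bullet> v \<le> norm xi * norm v" by (rule norm_cauchy_schwarz)
  also have "\<dots> \<le> lam * norm v" using y(2) by (simp add: mult_right_mono)
  finally show "y \<le> a + lam * norm v" using y(1) by simp
qed

lemma rob_obj_eq:
  fixes C :: "real^'m^'n"
  assumes "lam \<ge> 0"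
  shows "rob_obj chat C lam x = chat \<bullet> x + lam * norm (transpose C *v x)"
proof -
  have "\<And>xi. chat \<bullet> x + xi \<bullet> (transpose C *v x) = (chat + C *v xi) \<bullet> x"
    by (simp add: inner_add_left inner_matrix_vector_mult)
  then have "{c \<bullet> x | c. c \<in> unc_set chat C lam}
      = {chat \<bullet> x + xi \<bullet> (transpose C *v x) | xi. norm xi \<le> lam}"
    unfolding unc_set_def by auto
  then show ?thesis
    unfolding rob_obj_def using Sup_inner_cball[OF assms] by simp
qed

lemma comp_val_eq:
  fixes C :: "real^'m^'n"
  assumes "Lam \<subseteq> {0..}"
    and "set_integrable lborel Lam w"
    and "set_integrable lborel Lam (\<lambda>lam. lam * w lam)"
  shows "comp_val Lam w chat C x = (chat \<bullet> x) * (LINT lam:Lam|lborel. w lam)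
           + norm (transpose C *v x) * (LINT lam:Lam|lborel. lam * w lam)"
proof -
  let ?a = "chat \<bullet> x" and ?b = "norm (transpose C *v x)"
  have "(\<lambda>lam. indicator Lam lam *\<^sub>R (w lam * rob_obj chat C lam x))
      = (\<lambda>lam. ?a * (indicator Lam lam *\<^sub>R w lam) + ?b * (indicator Lam lam *\<^sub>R (lam * w lam)))"
  proof
    fix lam show "indicator Lam lam *\<^sub>R (w lam * rob_obj chat C lam x)
      = ?a * (indicator Lam lam *\<^sub>R w lam) + ?b * (indicator Lam lam *\<^sub>R (lam * w lam))"
      using assms(1) by (cases "lam \<in> Lam") (auto simp: rob_obj_eq algebra_simps)
  qed
  moreover have "integrable lborel (\<lambda>lam. indicator Lam lam *\<^sub>R w lam)"
    and "integrable lborel (\<lambda>lam. indicator Lam lam *\<^sub>R (lam * w lam))"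
    using assms(2,3) by (simp_all add: set_integrable_def)
  ultimately show ?thesis
    unfolding comp_val_def set_lebesgue_integral_def by simp
qed

lemma set_integral_weighted_eq_0:
  fixes w f :: "real \<Rightarrow> real"
  assumes "\<forall>lam\<in>Lam. w lam \<ge> 0"
    and "set_integrable lborel Lam w"
    and "(LINT lam:Lam|lborel. w lam) = 0"
  shows "(LINT lam:Lam|lborel. f lam * w lam) = 0"
proof -
  have "AE lam in lborel. indicator Lam lam *\<^sub>R w lam = 0"
    using assms unfolding set_lebesgue_integral_def set_integrable_def
    by (subst integral_nonneg_eq_0_iff_AE[symmetric]) (auto simp: indicator_def)
  then have "AE lam in lborel. indicator Lam lam *\<^sub>R (f lam * w lam) = 0"
    by eventually_elim (simp add: indicator_def split: if_splits)
  then show ?thesis unfolding set_lebesgue_integral_def by (rule integral_eq_zero_AE)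
qed

lemma is_opt_scale:
  assumes "c \<ge> 0" and "is_opt f X x"
  shows "is_opt (\<lambda>y. c * f y) X x"
  using assms by (auto simp: is_opt_def mult_left_mono)

theorem theorem2:
  fixes X :: "(real^'n) set" and chat :: "real^'n" and C :: "real^'m^'n"
    and Lam :: "real set" and w :: "real \<Rightarrow> real"
  assumes "X \<noteq> {}"
    and "\<forall>x\<in>X. \<forall>i. x $ i \<in> {0, 1}"
    and "Lam \<subseteq> {0..}"
    and "\<forall>lam\<in>Lam. w lam \<ge> 0"
    and "set_integrable lborel Lam w"
    and "set_integrable lborel Lam (\<lambda>lam. lam * w lam)"
  shows "\<exists>lam'\<ge>0. \<forall>x. is_opt (rob_obj chat C lam') X x \<longrightarrow>
                        is_opt (comp_val Lam w chat C) X x"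
proof -
  define W where "W = (LINT lam:Lam|lborel. w lam)"
  define L where "L = (LINT lam:Lam|lborel. lam * w lam)"
  have "W \<ge> 0" unfolding W_def set_lebesgue_integral_def
    using assms(4) by (intro Bochner_Integration.integral_nonneg) (auto simp: indicator_def)
  moreover have "L \<ge> 0" unfolding L_def set_lebesgue_integral_def
    using assms(3,4) by (intro Bochner_Integration.integral_nonneg) (auto simp: indicator_def)
  moreover have "W = 0 \<Longrightarrow> L = 0"
    unfolding W_def L_def by (rule set_integral_weighted_eq_0[OF assms(4,5)])
  ultimately have "comp_val Lam w chat C = (\<lambda>x. W * rob_obj chat C (L / W) x)"
    using comp_val_eq[OF assms(3,5,6)]
    by (fastforce simp: W_def[symmetric] L_def[symmetric] rob_obj_eq algebra_simps)
  with \<open>W \<ge> 0\<close> \<open>L \<ge> 0\<close> show ?thesis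
    by (metis divide_nonneg_nonneg is_opt_scale)
qed

end
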